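(* Let $E$ be a nonempty closed convex subset of a real Hilbert space $H$. Let $f:E\times E\to\mathbb{R}$ be a bifunction satisfying conditions (A1)–(A4) below, and let $S:E\to E$ be a $(\lambda,\gamma)$-generalized hybrid mapping for some $\lambda,\gamma\in\mathbb{R}$, with $F(S)\cap EP(f)\neq\emptyset$. Let $\{r_n\}\subset(0,\infty)$ satisfy $\liminf_{n\to\infty}r_n>0$ and let $\{\beta_n\}$ be a sequence in $[b,1]$ for some $b\in(0,1)$ with $\liminf_{n\to\infty}\beta_n(1-\beta_n)>0$. Let $\{x_n\}$ and $\{u_n\}$ be generated by $x_1=x\in E$ and, for all $n\in\mathbb{N}$, $$u_n\in E \text{ such that } f(u_n,y)+\frac{1}{r_n}\langle y-u_n,u_n-x_n\rangle\ge 0\quad\text{for all } y\in E,$$ $$x_{n+1}=S\big((1-\beta_n)x_n+\beta_n Su_n\big).$$ Then $\{x_n\}$ converges weakly to a point $v\in F(S)\cap EP(f)$, where $v=\lim_{n\to\infty}P_{F(S)\cap EP(f)}(x_n)$.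
   Context: $F(S)=\{x\in E: Sx=x\}$. A mapping $S:E\to E$ is $(\lambda,\gamma)$-generalized hybrid if $\lambda\|Sx-Sy\|^2+(1-\lambda)\|x-Sy\|^2\le \gamma\|Sx-y\|^2+(1-\gamma)\|x-y\|^2$ for all $x,y\in E$. $EP(f)=\{x\in E: f(x,y)\ge 0 \text{ for all } y\in E\}$. Conditions: (A1) $f(x,x)=0$ for all $x\in E$; (A2) $f(x,y)+f(y,x)\le 0$ for all $x,y\in E$; (A3) for all $x,y,z\in E$, $\lim_{t\downarrow 0} f(tz+(1-t)x,y)\le f(x,y)$; (A4) for each $x\in E$, $y\mapsto f(x,y)$ is convex and lower semicontinuous. $P_K$ is the metric projection of $H$ onto a nonempty closed convex set $K$; the limit defining $v$ is in norm. *)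

theory Defs
  imports "HOL-Analysis.Analysis"
begin

definition fixset :: "'a set \<Rightarrow> ('a \<Rightarrow> 'a) \<Rightarrow> 'a set" where
  "fixset E S = {x \<in> E. S x = x}"

definition gen_hybrid :: "'a::real_inner set \<Rightarrow> real \<Rightarrow> real \<Rightarrow> ('a \<Rightarrow> 'a) \<Rightarrow> bool" where
  "gen_hybrid E lam gam S \<longleftrightarrow>
     (\<forall>x\<in>E. \<forall>y\<in>E. lam * (norm (S x - S y))\<^sup>2 + (1 - lam) * (norm (x - S y))\<^sup>2
                 \<le> gam * (norm (S x - y))\<^sup>2 + (1 - gam) * (norm (x - y))\<^sup>2)"

definition EP :: "'a set \<Rightarrow> ('a \<Rightarrow> 'a \<Rightarrow> real) \<Rightarrow> 'a set" where
  "EP E f = {x \<in> E. \<forall>y\<in>E. f x y \<ge> 0}"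

definition lsc_on :: "'a::topological_space set \<Rightarrow> ('a \<Rightarrow> real) \<Rightarrow> bool" where
  "lsc_on E g \<longleftrightarrow> (\<forall>a. openin (top_of_set E) {y \<in> E. a < g y})"

definition metric_proj :: "'a::real_inner set \<Rightarrow> 'a \<Rightarrow> 'a" where
  "metric_proj K x = (SOME p. p \<in> K \<and> (\<forall>y\<in>K. dist x p \<le> dist x y))"

definition weak_conv :: "(nat \<Rightarrow> 'a::real_inner) \<Rightarrow> 'a \<Rightarrow> bool" where
  "weak_conv x v \<longleftrightarrow> (\<forall>y. (\<lambda>n. inner (x n) y) \<longlonglongrightarrow> inner v y)"

end

theory Submission
  imports Defs "HOL-Library.Diagonal_Subsequence"
begin

text \<open>For \<open>p\<close> in \<open>Sol = F(S) \<inter> EP(f)\<close>, the regularization step \<open>x\<^sub>n \<mapsto> u\<^sub>n\<close> is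
  firmly quasi-nonexpansive and \<open>S\<close> is quasi-nonexpansive, which yields
  \<open>\<parallel>x\<^sub>n\<^sub>+\<^sub>1 - p\<parallel>\<^sup>2 \<le> \<parallel>x\<^sub>n - p\<parallel>\<^sup>2 - \<beta>\<^sub>n \<parallel>u\<^sub>n - x\<^sub>n\<parallel>\<^sup>2 - \<beta>\<^sub>n (1 - \<beta>\<^sub>n) \<parallel>x\<^sub>n - S u\<^sub>n\<parallel>\<^sup>2\<close>.
  Hence \<open>(x\<^sub>n)\<close> is Fej\'er monotone with respect to \<open>Sol\<close>, and \<open>u\<^sub>n - x\<^sub>n \<rightarrow> 0\<close>,
  \<open>x\<^sub>n - S u\<^sub>n \<rightarrow> 0\<close>. Demiclosedness of \<open>I - S\<close> and Minty's lemma put every weak cluster point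
  of \<open>(x\<^sub>n)\<close> into \<open>Sol\<close>. For a Fej\'er monotone sequence the projections \<open>P x\<^sub>n\<close> onto \<open>Sol\<close> converge
  strongly, since \<open>\<parallel>P x\<^sub>m - P x\<^sub>n\<parallel>\<^sup>2 \<le> d(x\<^sub>n, Sol)\<^sup>2 - d(x\<^sub>m, Sol)\<^sup>2\<close> for \<open>m \<ge> n\<close>, and the
  variational inequality of the projection identifies every weak cluster point with their limit.
  Weak sequential compactness of bounded sets, needed to have cluster points at all, comes from a
  diagonal argument and the Riesz representation theorem.\<close>

section \<open>Nearest points and the Riesz representation\<close>

lemma power2_norm_add:
  fixes a b :: "'a::real_inner"
  shows "(norm (a + b))\<^sup>2 = (norm a)\<^sup>2 + (norm b)\<^sup>2 + 2 * inner a b"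
  by (simp add: power2_norm_eq_inner inner_add_left inner_add_right inner_commute)

lemma power2_norm_convex_comb:
  fixes a b :: "'a::real_inner"
  shows "(norm (t *\<^sub>R a + (1 - t) *\<^sub>R b))\<^sup>2
           = t * (norm a)\<^sup>2 + (1 - t) * (norm b)\<^sup>2 - t * (1 - t) * (norm (a - b))\<^sup>2"
  by (simp add: power2_norm_eq_inner inner_add_left inner_add_right inner_diff_left
      inner_diff_right inner_commute algebra_simps)

lemma convex_parallelogram_le:
  fixes a p q :: "'a::real_inner"
  assumes "convex C" "p \<in> C" "q \<in> C" "0 \<le> d" "\<And>y. y \<in> C \<Longrightarrow> d \<le> dist a y"
  shows "(norm (p - q))\<^sup>2 \<le> 2 * (dist a p)\<^sup>2 + 2 * (dist a q)\<^sup>2 - 4 * d\<^sup>2"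
proof -
  have "(1/2) *\<^sub>R p + (1 - 1/2) *\<^sub>R q \<in> C"
    using assms(1-3) by (intro convexD) auto
  then have "d \<le> norm ((1/2) *\<^sub>R (a - p) + (1 - 1/2) *\<^sub>R (a - q))"
    using assms(5) by (simp add: dist_norm algebra_simps flip: scaleR_add_right)
  then have "d\<^sup>2 \<le> (norm ((1/2) *\<^sub>R (a - p) + (1 - 1/2) *\<^sub>R (a - q)))\<^sup>2"
    using assms(4) power_mono by blast
  also have "\<dots> = (1/2) * (dist a p)\<^sup>2 + (1/2) * (dist a q)\<^sup>2 - (1/4) * (norm (p - q))\<^sup>2"
    by (subst power2_norm_convex_comb) (simp add: dist_norm norm_minus_commute)
  finally show ?thesis by simp
qed

lemma nearest_point_exists:
  fixes C :: "'a::{real_inner,complete_space} set"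
  assumes "closed C" "convex C" "C \<noteq> {}"
  shows "\<exists>p\<in>C. \<forall>q\<in>C. dist a p \<le> dist a q"
proof -
  define d where "d = Inf (dist a ` C)"
  have d_le: "d \<le> dist a y" if "y \<in> C" for y
    using that by (auto simp: d_def intro: cInf_lower bdd_belowI[of _ 0])
  have d_nonneg: "0 \<le> d"
    using assms(3) by (auto simp: d_def intro!: cInf_greatest)
  have "\<exists>q\<in>C. dist a q < d + 1 / Suc n" for n
    using cInf_lessD[of "dist a ` C" "d + 1 / Suc n"] assms(3) by (auto simp: d_def)
  then obtain q where q: "\<And>n. q n \<in> C" "\<And>n. dist a (q n) < d + 1 / Suc n"
    by metis
  have dist_q: "(\<lambda>n. dist a (q n)) \<longlonglongrightarrow> d"
  proof (rule tendsto_sandwich[of "\<lambda>n. d" _ _ "\<lambda>n. d + 1 / Suc n"])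
    show "(\<lambda>n. d + 1 / real (Suc n)) \<longlonglongrightarrow> d"
      using tendsto_add[OF tendsto_const[of d] LIMSEQ_Suc[OF lim_inverse_n']] by simp
  qed (use d_le q in \<open>auto intro!: always_eventually less_imp_le\<close>)
  have "Cauchy q"
  proof (rule CauchyI)
    fix e :: real
    assume "e > 0"
    have "(\<lambda>n. (dist a (q n))\<^sup>2 - d\<^sup>2) \<longlonglongrightarrow> d\<^sup>2 - d\<^sup>2"
      by (intro tendsto_intros dist_q)
    then have "\<forall>\<^sub>F n in sequentially. (dist a (q n))\<^sup>2 - d\<^sup>2 < e\<^sup>2 / 4"
      using \<open>e > 0\<close> by (intro order_tendstoD(2)) auto
    then obtain N where N: "\<And>n. n \<ge> N \<Longrightarrow> (dist a (q n))\<^sup>2 - d\<^sup>2 < e\<^sup>2 / 4"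
      unfolding eventually_sequentially by blast
    show "\<exists>N. \<forall>m\<ge>N. \<forall>n\<ge>N. norm (q m - q n) < e"
    proof (intro exI allI impI)
      fix m n
      assume "N \<le> m" "N \<le> n"
      then have "(norm (q m - q n))\<^sup>2 < e\<^sup>2"
        using convex_parallelogram_le[OF assms(2) q(1) q(1) d_nonneg d_le, of m n] N[of m] N[of n]
        by linarith
      then show "norm (q m - q n) < e"
        using \<open>e > 0\<close> by (simp add: power_less_imp_less_base)
    qed
  qed
  then obtain p where p: "q \<longlonglongrightarrow> p"
    using Cauchy_convergent convergent_def by blast
  have "p \<in> C"
    using assms(1) q(1) p closed_sequential_limits by blast
  moreover have "dist a p = d"
    using LIMSEQ_unique[OF tendsto_dist[OF tendsto_const p] dist_q] .
  ultimately show ?thesis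
    using d_le by auto
qed

lemma nearest_point_inner_le:
  fixes a p q :: "'a::real_inner"
  assumes "convex C" "p \<in> C" "\<forall>y\<in>C. dist a p \<le> dist a y" "q \<in> C"
  shows "inner (a - p) (q - p) \<le> 0"
proof (rule ccontr)
  define w where "w = q - p"
  define s where "s = inner (a - p) w"
  assume "\<not> ?thesis"
  then have s_pos: "s > 0"
    by (simp add: s_def w_def)
  then have ww_pos: "inner w w > 0"
    by (cases "w = 0") (auto simp: s_def)
  define t where "t = min 1 (s / inner w w)"
  have t: "0 < t" "t \<le> 1" "t * inner w w \<le> s"
    using s_pos ww_pos by (auto simp: t_def min_def field_simps)
  have "(1 - t) *\<^sub>R p + t *\<^sub>R q \<in> C"
    using assms t by (intro convexD) auto
  then have "(dist a p)\<^sup>2 \<le> (norm ((a - p) - t *\<^sub>R w))\<^sup>2"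
    using assms(3) by (auto simp: dist_norm w_def algebra_simps intro!: power_mono)
  also have "\<dots> = (dist a p)\<^sup>2 - 2 * t * s + t * (t * inner w w)"
    by (simp add: power2_norm_eq_inner dist_norm s_def inner_diff_left inner_diff_right
        inner_commute algebra_simps)
  also have "\<dots> \<le> (dist a p)\<^sup>2 - t * s"
    using t by (simp add: mult_left_mono)
  finally show False
    using t s_pos by (simp add: mult_le_0_iff)
qed

lemma nearest_point_orthogonal:
  fixes a p v :: "'a::real_inner"
  assumes "subspace V" "p \<in> V" "\<forall>y\<in>V. dist a p \<le> dist a y" "v \<in> V"
  shows "inner (a - p) v = 0"
proof -
  have "p + v \<in> V" "p - v \<in> V"
    using assms by (auto intro: subspace_add subspace_diff)
  from this[THEN nearest_point_inner_le[OF subspace_imp_convex[OF assms(1)] assms(2,3)]]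
  show ?thesis
    by (simp add: inner_diff_right)
qed

lemma metric_proj:
  fixes K :: "'a::{real_inner,complete_space} set"
  assumes "closed K" "convex K" "K \<noteq> {}"
  shows metric_proj_in: "metric_proj K a \<in> K"
    and metric_proj_le: "\<forall>y\<in>K. dist a (metric_proj K a) \<le> dist a y"
  using someI_ex[OF nearest_point_exists[OF assms, of a, unfolded Bex_def]]
  by (simp_all add: metric_proj_def)

lemma metric_proj_inner_le:
  fixes K :: "'a::{real_inner,complete_space} set"
  assumes "closed K" "convex K" "y \<in> K"
  shows "inner (a - metric_proj K a) (y - metric_proj K a) \<le> 0"
  using assms metric_proj[of K a] by (intro nearest_point_inner_le) auto

lemma riesz_representation:
  fixes L :: "'a::{real_inner,complete_space} \<Rightarrow> real"
  assumes add: "\<And>a b. L (a + b) = L a + L b" and scale: "\<And>c a. L (c *\<^sub>R a) = c * L a"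
    and bound: "\<And>a. \<bar>L a\<bar> \<le> M * norm a"
  shows "\<exists>z. \<forall>y. L y = inner z y"
proof (cases "\<forall>y. L y = 0")
  case True
  then show ?thesis
    by (intro exI[of _ 0]) simp
next
  case False
  then obtain a where a: "L a \<noteq> 0"
    by blast
  have L_diff: "L (y - y') = L y - L y'" for y y'
    using add[of y "-y'"] scale[of "-1" y'] by simp
  define K where "K = {y. L y = 0}"
  have "subspace K"
    using scale[of 0 0] by (simp add: subspace_def K_def add scale)
  have "closed K"
    unfolding closed_sequential_limits
  proof (intro allI impI, elim conjE)
    fix ys l
    assume ys: "\<forall>n. ys n \<in> K" "ys \<longlonglongrightarrow> l"
    have "(\<lambda>n. M * norm (l - ys n)) \<longlonglongrightarrow> M * norm (l - l)"
      using ys(2) by (intro tendsto_intros)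
    moreover have "\<bar>L l\<bar> \<le> M * norm (l - ys n)" for n
      using bound[of "l - ys n"] ys(1) by (simp add: L_diff K_def)
    ultimately have "\<bar>L l\<bar> \<le> 0"
      by (intro tendsto_lowerbound[of "\<lambda>n. M * norm (l - ys n)"]) auto
    then show "l \<in> K"
      by (simp add: K_def)
  qed
  obtain p where p: "p \<in> K" "\<forall>y\<in>K. dist a p \<le> dist a y"
    using nearest_point_exists[OF \<open>closed K\<close> subspace_imp_convex[OF \<open>subspace K\<close>]]
      subspace_0[OF \<open>subspace K\<close>] by blast
  define w where "w = a - p"
  have Lw: "L w = L a"
    using p(1) by (simp add: w_def L_diff K_def)
  have "inner w w \<noteq> 0"
    using a Lw scale[of 0 0] by auto
  show ?thesis
  proof (intro exI allI)
    fix y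
    have "y - (L y / L w) *\<^sub>R w \<in> K"
      using a Lw by (simp add: K_def L_diff scale)
    from nearest_point_orthogonal[OF \<open>subspace K\<close> p this]
    have "inner w y = (L y / L w) * inner w w"
      by (simp add: w_def inner_diff_right)
    then show "L y = inner ((L w / inner w w) *\<^sub>R w) y"
      using a Lw \<open>inner w w \<noteq> 0\<close> by (simp add: field_simps)
  qed
qed

section \<open>Weak convergence\<close>

lemma inner_tendsto_zero_bounded:
  fixes e v :: "nat \<Rightarrow> 'a::real_inner"
  assumes "e \<longlonglongrightarrow> 0" "\<And>k. norm (v k) \<le> C"
  shows "(\<lambda>k. inner (e k) (v k)) \<longlonglongrightarrow> 0"
proof (rule Lim_null_comparison[where g="\<lambda>k. C * norm (e k)"])
  show "\<forall>\<^sub>F k in sequentially. norm (inner (e k) (v k)) \<le> C * norm (e k)"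
  proof (intro always_eventually allI)
    fix k
    have "norm (inner (e k) (v k)) \<le> norm (e k) * norm (v k)"
      using Cauchy_Schwarz_ineq2 by simp
    also have "\<dots> \<le> norm (e k) * C"
      using assms(2) by (intro mult_left_mono) auto
    finally show "norm (inner (e k) (v k)) \<le> C * norm (e k)"
      by (simp add: mult.commute)
  qed
  show "(\<lambda>k. C * norm (e k)) \<longlonglongrightarrow> 0"
    using tendsto_mult_right_zero assms(1) tendsto_norm_zero by blast
qed

lemma abs_inner_le_norm_bound:
  fixes a y :: "'a::real_inner"
  assumes "norm a \<le> M"
  shows "\<bar>inner a y\<bar> \<le> M * norm y"
  using Cauchy_Schwarz_ineq2[of a y] mult_right_mono[OF assms norm_ge_zero[of y]] by linarith

lemma weak_conv_inner_tendsto: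
  fixes w :: "nat \<Rightarrow> 'a::real_inner"
  assumes "weak_conv w z" "\<And>k. norm (w k) \<le> M" "q \<longlonglongrightarrow> q0"
  shows "(\<lambda>k. inner (w k) (q k)) \<longlonglongrightarrow> inner z q0"
proof -
  have "(\<lambda>k. inner (w k) q0 + inner (q k - q0) (w k)) \<longlonglongrightarrow> inner z q0 + 0"
    using assms by (intro tendsto_add inner_tendsto_zero_bounded)
      (auto simp: weak_conv_def LIM_zero)
  moreover have "inner (w k) q0 + inner (q k - q0) (w k) = inner (w k) (q k)" for k
    by (simp add: inner_diff_left inner_diff_right inner_commute)
  ultimately show ?thesis
    by simp
qed

lemma weak_conv_diff_tendsto_zero:
  assumes "weak_conv a z" "(\<lambda>n. b n - a n) \<longlonglongrightarrow> 0"
  shows "weak_conv b z"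
  unfolding weak_conv_def
proof
  fix y
  have "(\<lambda>n. inner (a n) y + inner (b n - a n) y) \<longlonglongrightarrow> inner z y + inner 0 y"
    using assms(1) tendsto_inner[OF assms(2) tendsto_const[of y]]
    by (intro tendsto_add) (auto simp: weak_conv_def)
  then show "(\<lambda>n. inner (b n) y) \<longlonglongrightarrow> inner z y"
    by (simp add: inner_diff_left)
qed

lemma weak_conv_inner_diff_tendsto_zero:
  assumes "weak_conv w z"
  shows "(\<lambda>k. inner (w k - z) y) \<longlonglongrightarrow> 0"
proof -
  have "(\<lambda>k. inner (w k) y - inner z y) \<longlonglongrightarrow> inner z y - inner z y"
    using assms by (intro tendsto_diff tendsto_const) (simp add: weak_conv_def)
  then show ?thesis
    by (simp add: inner_diff_left)
qed

lemma weak_conv_closed_convex: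
  fixes C :: "'a::{real_inner,complete_space} set"
  assumes "closed C" "convex C" "weak_conv w z" "\<forall>\<^sub>F k in sequentially. w k \<in> C"
  shows "z \<in> C"
proof -
  have "C \<noteq> {}"
    using assms(4) by (auto simp: eventually_sequentially)
  then obtain p where p: "p \<in> C" "\<forall>y\<in>C. dist z p \<le> dist z y"
    using nearest_point_exists[OF assms(1,2)] by blast
  have "\<forall>\<^sub>F k in sequentially. inner (w k - p) (z - p) \<le> 0"
    using assms(4)
  proof (rule eventually_mono)
    fix k
    assume "w k \<in> C"
    from nearest_point_inner_le[OF assms(2) p this]
    show "inner (w k - p) (z - p) \<le> 0"
      by (simp add: inner_commute)
  qed
  moreover have "(\<lambda>k. inner (w k) (z - p) - inner p (z - p)) \<longlonglongrightarrow> inner z (z - p) - inner p (z - p)"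
    using assms(3) by (intro tendsto_diff tendsto_const) (auto simp: weak_conv_def)
  ultimately have "inner (z - p) (z - p) \<le> 0"
    by (intro tendsto_upperbound[of "\<lambda>k. inner (w k - p) (z - p)"]) (auto simp: inner_diff_left)
  then have "z = p"
    by (metis inner_eq_zero_iff inner_ge_zero order_antisym right_minus_eq)
  with p show ?thesis
    by simp
qed

lemma bounded_inner_convergent_diagonal:
  fixes x :: "nat \<Rightarrow> 'a::real_inner"
  assumes "\<And>n. norm (x n) \<le> M"
  shows "\<exists>\<sigma>. strict_mono \<sigma> \<and> (\<forall>n. convergent (\<lambda>k. inner (x (\<sigma> k)) (x n)))"
proof -
  interpret s: subseqs "\<lambda>n s. convergent (\<lambda>k. inner (x (s k)) (x n))"
  proof
    fix n and s :: "nat \<Rightarrow> nat"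
    have "bounded (range (\<lambda>k. inner (x (s k)) (x n)))"
      unfolding bounded_iff using abs_inner_le_norm_bound[OF assms] by auto
    then obtain l r where "strict_mono r" "((\<lambda>k. inner (x (s k)) (x n)) \<circ> r) \<longlonglongrightarrow> l"
      using bounded_imp_convergent_subsequence by blast
    then show "\<exists>r. strict_mono r \<and> convergent (\<lambda>k. inner (x ((s \<circ> r) k)) (x n))"
      by (auto simp: convergent_def o_def)
  qed
  have "convergent (\<lambda>k. inner (x (s.diagseq k)) (x n))" for n
  proof -
    have "convergent (\<lambda>k. inner (x ((s.diagseq \<circ> (+) (Suc n)) k)) (x n))"
    proof (rule s.diagseq_holds)
      fix r s :: "nat \<Rightarrow> nat" and n
      assume "strict_mono r" "convergent (\<lambda>k. inner (x (s k)) (x n))"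
      then show "convergent (\<lambda>k. inner (x ((s \<circ> r) k)) (x n))"
        using LIMSEQ_subseq_LIMSEQ by (fastforce simp: convergent_def o_def)
    qed
    then obtain l where "(\<lambda>k. inner (x (s.diagseq (k + Suc n))) (x n)) \<longlonglongrightarrow> l"
      by (auto simp: convergent_def o_def add.commute)
    then show ?thesis
      using LIMSEQ_offset convergent_def by blast
  qed
  then show ?thesis
    using s.subseq_diagseq by blast
qed

lemma inner_convergent_subspace:
  "subspace {y. convergent (\<lambda>k. inner (w k) y)}"
  unfolding subspace_def mem_Collect_eq inner_add_right inner_scaleR_right
  by (auto intro!: convergent_add convergent_mult convergent_const)

lemma inner_convergent_closed:
  fixes w :: "nat \<Rightarrow> 'a::real_inner"
  assumes "\<And>k. norm (w k) \<le> M"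
  shows "closed {y. convergent (\<lambda>k. inner (w k) y)}"
  unfolding closed_sequential_limits
proof (intro allI impI, elim conjE)
  fix ys l
  assume ys: "\<forall>n. ys n \<in> {y. convergent (\<lambda>k. inner (w k) y)}" "ys \<longlonglongrightarrow> l"
  have M: "0 \<le> M"
    using assms[of 0] norm_ge_zero order_trans by blast
  show "l \<in> {y. convergent (\<lambda>k. inner (w k) y)}"
    unfolding mem_Collect_eq Cauchy_convergent_iff[symmetric]
  proof (rule CauchyI)
    fix e :: real
    assume "e > 0"
    define \<epsilon> where "\<epsilon> = e / (4 * (M + 1))"
    have "\<epsilon> > 0"
      using \<open>e > 0\<close> M by (simp add: \<epsilon>_def)
    then obtain j where j: "norm (ys j - l) < \<epsilon>"
      using ys(2) unfolding LIMSEQ_iff by blast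
    have close: "\<bar>inner (w k) (ys j - l)\<bar> < e / 4" for k
    proof -
      have "\<bar>inner (w k) (ys j - l)\<bar> \<le> M * \<epsilon>"
        using abs_inner_le_norm_bound[OF assms, of k "ys j - l"] j M
        by (smt (verit) mult_left_mono)
      also have "\<dots> < e / 4"
        using \<open>e > 0\<close> M by (simp add: \<epsilon>_def field_simps)
      finally show ?thesis .
    qed
    have "Cauchy (\<lambda>k. inner (w k) (ys j))"
      using ys(1) by (simp add: Cauchy_convergent_iff)
    then obtain N where N: "\<forall>m\<ge>N. \<forall>n\<ge>N. \<bar>inner (w m) (ys j) - inner (w n) (ys j)\<bar> < e / 2"
      using \<open>e > 0\<close> unfolding Cauchy_iff real_norm_def by (meson half_gt_zero)
    show "\<exists>N. \<forall>m\<ge>N. \<forall>n\<ge>N. norm (inner (w m) l - inner (w n) l) < e"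
    proof (intro exI allI impI)
      fix m n
      assume "N \<le> m" "N \<le> n"
      then have "\<bar>inner (w m) (ys j) - inner (w n) (ys j)\<bar> < e / 2"
        using N by blast
      then show "norm (inner (w m) l - inner (w n) l) < e"
        using close[of m] close[of n] unfolding real_norm_def inner_diff_right by arith
    qed
  qed
qed

lemma weak_conv_if_inner_convergent:
  fixes w :: "nat \<Rightarrow> 'a::{real_inner,complete_space}"
  assumes "\<And>k. norm (w k) \<le> M" "\<And>y. convergent (\<lambda>k. inner (w k) y)"
  shows "\<exists>z. weak_conv w z"
proof -
  define L where "L y = lim (\<lambda>k. inner (w k) y)" for y
  have L: "(\<lambda>k. inner (w k) y) \<longlonglongrightarrow> L y" for y
    using assms(2) by (simp add: L_def convergent_LIMSEQ_iff)
  have "(\<lambda>k. inner (w k) (a + b)) \<longlonglongrightarrow> L a + L b" for a b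
    using tendsto_add[OF L L] by (simp add: inner_add_right)
  then have "L (a + b) = L a + L b" for a b
    using LIMSEQ_unique[OF L] by blast
  moreover have "(\<lambda>k. inner (w k) (c *\<^sub>R a)) \<longlonglongrightarrow> c * L a" for c a
    using tendsto_mult_left[OF L] by simp
  then have "L (c *\<^sub>R a) = c * L a" for c a
    using LIMSEQ_unique[OF L] by blast
  moreover have "\<bar>L a\<bar> \<le> M * norm a" for a
    using abs_inner_le_norm_bound[OF assms(1)]
    by (intro tendsto_upperbound[OF tendsto_rabs[OF L]] always_eventually) auto
  ultimately obtain z where "\<forall>y. L y = inner z y"
    using riesz_representation by metis
  then show ?thesis
    using L by (auto simp: weak_conv_def)
qed

lemma bounded_weak_conv_subseq:
  fixes x :: "nat \<Rightarrow> 'a::{real_inner,complete_space}"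
  assumes bound: "\<And>n. norm (x n) \<le> M"
  shows "\<exists>\<sigma> z. strict_mono \<sigma> \<and> weak_conv (x \<circ> \<sigma>) z"
proof -
  obtain \<sigma> where \<sigma>: "strict_mono \<sigma>" "\<And>n. convergent (\<lambda>k. inner (x (\<sigma> k)) (x n))"
    using bounded_inner_convergent_diagonal[of x M] bound by blast
  define V where "V = {y. convergent (\<lambda>k. inner (x (\<sigma> k)) y)}"
  have V: "subspace V" "closed V"
    using inner_convergent_subspace inner_convergent_closed[of "\<lambda>k. x (\<sigma> k)" M] bound
    by (auto simp: V_def)
  have "y \<in> V" for y
  proof -
    obtain p where p: "p \<in> V" "\<forall>q\<in>V. dist y p \<le> dist y q"
      using nearest_point_exists[OF V(2) subspace_imp_convex[OF V(1)]] subspace_0[OF V(1)]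
      by blast
    have "inner (x (\<sigma> k)) (y - p) = 0" for k
      using nearest_point_orthogonal[OF V(1) p, of "x (\<sigma> k)"] \<sigma>(2)
      by (simp add: V_def inner_commute)
    then have "y - p \<in> V"
      by (simp add: V_def convergent_const)
    then show "y \<in> V"
      using subspace_add[OF V(1) p(1)] by fastforce
  qed
  then obtain z where "weak_conv (\<lambda>k. x (\<sigma> k)) z"
    using weak_conv_if_inner_convergent[of "\<lambda>k. x (\<sigma> k)" M] bound by (auto simp: V_def)
  with \<sigma>(1) show ?thesis
    by (auto simp: o_def)
qed

lemma weak_conv_if_unique_cluster:
  fixes x :: "nat \<Rightarrow> 'a::{real_inner,complete_space}"
  assumes bound: "\<And>n. norm (x n) \<le> M"
    and cluster: "\<And>\<sigma> z. strict_mono \<sigma> \<Longrightarrow> weak_conv (x \<circ> \<sigma>) z \<Longrightarrow> z = v"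
  shows "weak_conv x v"
  unfolding weak_conv_def
proof (rule allI, rule ccontr)
  fix y
  assume "\<not> (\<lambda>n. inner (x n) y) \<longlonglongrightarrow> inner v y"
  then obtain \<epsilon> where "\<epsilon> > 0"
    and "infinite {n. \<epsilon> \<le> dist (inner (x n) y) (inner v y)}"
    unfolding tendsto_iff by (auto simp: not_eventually not_less frequently_cofinite[symmetric]
        cofinite_eq_sequentially)
  then obtain \<sigma> :: "nat \<Rightarrow> nat" where \<sigma>: "strict_mono \<sigma>"
    "\<And>k. \<epsilon> \<le> dist (inner (x (\<sigma> k)) y) (inner v y)"
    using infinite_enumerate by blast
  have "norm ((x \<circ> \<sigma>) k) \<le> M" for k
    using bound by simp
  then obtain \<rho> z where \<rho>: "strict_mono \<rho>" "weak_conv (x \<circ> \<sigma> \<circ> \<rho>) z"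
    using bounded_weak_conv_subseq by blast
  have "strict_mono (\<sigma> \<circ> \<rho>)"
    using \<sigma>(1) \<rho>(1) by (rule strict_mono_o)
  moreover have "weak_conv (x \<circ> (\<sigma> \<circ> \<rho>)) z"
    using \<rho>(2) by (simp add: o_assoc)
  ultimately have "weak_conv (x \<circ> (\<sigma> \<circ> \<rho>)) v"
    using cluster by blast
  then have "(\<lambda>k. dist (inner (x (\<sigma> (\<rho> k))) y) (inner v y)) \<longlonglongrightarrow> dist (inner v y) (inner v y)"
    by (intro tendsto_dist tendsto_const) (auto simp: weak_conv_def)
  then have "\<epsilon> \<le> 0"
    using \<sigma>(2) by (intro tendsto_lowerbound) auto
  with \<open>\<epsilon> > 0\<close> show False
    by simp
qed

section \<open>Fej\'er monotone sequences\<close>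

lemma fejer_monotone_le:
  assumes "\<And>n. norm (x (Suc n) - p) \<le> norm (x n - p)" "n \<le> m"
  shows "norm (x m - p) \<le> norm (x n - p)"
  using decseq_SucI[of "\<lambda>n. norm (x n - p)"] assms unfolding decseq_def by blast

lemma fejer_metric_proj_le:
  fixes x :: "nat \<Rightarrow> 'a::{real_inner,complete_space}"
  assumes F: "closed F" "convex F" "F \<noteq> {}"
    and fejer: "\<And>p n. p \<in> F \<Longrightarrow> norm (x (Suc n) - p) \<le> norm (x n - p)"
    and "n \<le> m"
  shows "(norm (metric_proj F (x m) - metric_proj F (x n)))\<^sup>2
           \<le> (norm (x n - metric_proj F (x n)))\<^sup>2 - (norm (x m - metric_proj F (x m)))\<^sup>2"
proof -
  let ?P = "metric_proj F"
  have "(norm (x m - ?P (x n)))\<^sup>2 \<le> (norm (x n - ?P (x n)))\<^sup>2"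
    using fejer_monotone_le[of x "?P (x n)", OF fejer[OF metric_proj_in[OF F]] \<open>n \<le> m\<close>]
    by (simp add: power_mono)
  moreover have "0 \<le> inner (x m - ?P (x m)) (?P (x m) - ?P (x n))"
    using metric_proj_inner_le[OF F(1,2) metric_proj_in[OF F], of "x m" "x n"]
    by (simp add: inner_diff_right)
  moreover have "x m - ?P (x n) = (x m - ?P (x m)) + (?P (x m) - ?P (x n))"
    by simp
  ultimately show ?thesis
    by (simp only: power2_norm_add)
qed

lemma fejer_metric_proj_convergent:
  fixes x :: "nat \<Rightarrow> 'a::{real_inner,complete_space}"
  assumes F: "closed F" "convex F" "F \<noteq> {}"
    and fejer: "\<And>p n. p \<in> F \<Longrightarrow> norm (x (Suc n) - p) \<le> norm (x n - p)"
  shows "convergent (\<lambda>n. metric_proj F (x n))"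
proof -
  let ?P = "metric_proj F"
  define D where "D n = (norm (x n - ?P (x n)))\<^sup>2" for n
  have "decseq D"
  proof (rule decseq_SucI)
    fix n
    have "dist (x (Suc n)) (?P (x (Suc n))) \<le> dist (x (Suc n)) (?P (x n))"
      using metric_proj_le[OF F] metric_proj_in[OF F] by blast
    also have "\<dots> \<le> norm (x n - ?P (x n))"
      using fejer[OF metric_proj_in[OF F]] by (simp add: dist_norm)
    finally show "D (Suc n) \<le> D n"
      by (simp add: D_def dist_norm power_mono)
  qed
  moreover have "\<forall>n. 0 \<le> D n"
    by (simp add: D_def)
  ultimately obtain L where "D \<longlonglongrightarrow> L"
    using decseq_convergent by blast
  then have "Cauchy D"
    by (rule LIMSEQ_imp_Cauchy)
  have "Cauchy (\<lambda>n. ?P (x n))"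
  proof (rule CauchyI)
    fix e :: real
    assume "e > 0"
    then obtain N where N: "\<forall>m\<ge>N. \<forall>n\<ge>N. \<bar>D m - D n\<bar> < e\<^sup>2"
      using \<open>Cauchy D\<close> unfolding Cauchy_iff real_norm_def by (meson zero_less_power)
    have ordered: "(norm (?P (x m) - ?P (x n)))\<^sup>2 < e\<^sup>2" if "N \<le> n" "n \<le> m" for m n
    proof -
      have "\<bar>D n - D m\<bar> < e\<^sup>2"
        using N that(1) order_trans[OF that] by blast
      then show ?thesis
        using fejer_metric_proj_le[of F x, OF F fejer \<open>n \<le> m\<close>] unfolding D_def by linarith
    qed
    have any_order: "(norm (?P (x m) - ?P (x n)))\<^sup>2 < e\<^sup>2" if "N \<le> n" "N \<le> m" for m n
    proof (cases "n \<le> m")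
      case False
      then have "(norm (?P (x n) - ?P (x m)))\<^sup>2 < e\<^sup>2"
        using ordered[of m n] that by simp
      then show ?thesis
        by (simp add: norm_minus_commute)
    qed (use ordered that in blast)
    show "\<exists>N. \<forall>m\<ge>N. \<forall>n\<ge>N. norm (?P (x m) - ?P (x n)) < e"
    proof (intro exI allI impI)
      fix m n
      assume "N \<le> m" "N \<le> n"
      then have "(norm (?P (x m) - ?P (x n)))\<^sup>2 < e\<^sup>2"
        using any_order by blast
      then show "norm (?P (x m) - ?P (x n)) < e"
        by (rule power_less_imp_less_base) (use \<open>e > 0\<close> in simp)
    qed
  qed
  then show ?thesis
    by (simp add: Cauchy_convergent_iff)
qed

text \<open>By the variational inequality for the projection, every weak cluster point coincides
  with the strong limit of the projections.\<close>
lemma fejer_monotone_weak_conv: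
  fixes x :: "nat \<Rightarrow> 'a::{real_inner,complete_space}"
  assumes F: "closed F" "convex F" "F \<noteq> {}"
    and fejer: "\<And>p n. p \<in> F \<Longrightarrow> norm (x (Suc n) - p) \<le> norm (x n - p)"
    and cluster: "\<And>\<sigma> z. strict_mono \<sigma> \<Longrightarrow> weak_conv (x \<circ> \<sigma>) z \<Longrightarrow> z \<in> F"
  shows "\<exists>v\<in>F. weak_conv x v \<and> (\<lambda>n. metric_proj F (x n)) \<longlonglongrightarrow> v"
proof -
  let ?P = "metric_proj F"
  obtain v where v: "(\<lambda>n. ?P (x n)) \<longlonglongrightarrow> v"
    using fejer_metric_proj_convergent[of F x, OF F fejer] by (auto simp: convergent_def)
  have "v \<in> F"
    using closed_sequentially[OF F(1) _ v] metric_proj_in[OF F] by blast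
  obtain p where "p \<in> F"
    using F(3) by blast
  have bound: "norm (x n) \<le> norm (x 0 - p) + norm p" for n
    using norm_triangle_sub[of "x n" p] fejer_monotone_le[of x p, OF fejer[OF \<open>p \<in> F\<close>], of 0 n] by simp
  have "z = v" if \<sigma>: "strict_mono \<sigma>" and z: "weak_conv (x \<circ> \<sigma>) z" for \<sigma> z
  proof -
    have "z \<in> F"
      using cluster[OF \<sigma> z] .
    have v\<sigma>: "(\<lambda>k. ?P (x (\<sigma> k))) \<longlonglongrightarrow> v"
      using LIMSEQ_subseq_LIMSEQ[OF v \<sigma>] by (simp add: o_def)
    have "(\<lambda>k. inner ((x \<circ> \<sigma>) k) (z - ?P (x (\<sigma> k))) - inner (?P (x (\<sigma> k))) (z - ?P (x (\<sigma> k))))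
            \<longlonglongrightarrow> inner z (z - v) - inner v (z - v)"
      using z bound v\<sigma> by (intro tendsto_diff weak_conv_inner_tendsto tendsto_inner tendsto_const)
        (auto simp: o_def)
    then have "(\<lambda>k. inner (x (\<sigma> k) - ?P (x (\<sigma> k))) (z - ?P (x (\<sigma> k))))
                 \<longlonglongrightarrow> inner (z - v) (z - v)"
      by (simp add: inner_diff_left)
    moreover have "inner (x (\<sigma> k) - ?P (x (\<sigma> k))) (z - ?P (x (\<sigma> k))) \<le> 0" for k
      using metric_proj_inner_le[OF F(1,2) \<open>z \<in> F\<close>] .
    ultimately have "inner (z - v) (z - v) \<le> 0"
      by (intro tendsto_upperbound always_eventually) auto
    then show "z = v"
      by (metis inner_eq_zero_iff inner_ge_zero order_antisym right_minus_eq)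
  qed
  then have "weak_conv x v"
    using weak_conv_if_unique_cluster bound by blast
  with \<open>v \<in> F\<close> v show ?thesis
    by blast
qed

section \<open>Generalized hybrid mappings\<close>

lemma gen_hybrid_quasi_nonexpansive:
  assumes "gen_hybrid E lam gam S" "p \<in> fixset E S" "y \<in> E"
  shows "norm (S y - p) \<le> norm (y - p)"
proof -
  have "p \<in> E" "S p = p"
    using assms(2) by (auto simp: fixset_def)
  with assms(1,3) have "lam * (norm (p - S y))\<^sup>2 + (1 - lam) * (norm (p - S y))\<^sup>2
      \<le> gam * (norm (p - y))\<^sup>2 + (1 - gam) * (norm (p - y))\<^sup>2"
    unfolding gen_hybrid_def by fastforce
  then have "(norm (p - S y))\<^sup>2 \<le> (norm (p - y))\<^sup>2"
    unfolding left_diff_distrib by linarith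
  then show ?thesis
    by (subst (1 2) norm_minus_commute) (rule power2_le_imp_le, simp_all)
qed

lemma fixset_closed:
  assumes "gen_hybrid E lam gam S" "closed E"
  shows "closed (fixset E S)"
  unfolding closed_sequential_limits
proof (intro allI impI, elim conjE)
  fix ps l
  assume ps: "\<forall>n. ps n \<in> fixset E S" "ps \<longlonglongrightarrow> l"
  then have "\<forall>n. ps n \<in> E"
    by (simp add: fixset_def)
  then have "l \<in> E"
    using closed_sequentially[OF assms(2) _ ps(2)] by blast
  have "(\<lambda>n. S l - ps n) \<longlonglongrightarrow> 0"
  proof (rule Lim_null_comparison[where g="\<lambda>n. norm (l - ps n)"])
    show "\<forall>\<^sub>F n in sequentially. norm (S l - ps n) \<le> norm (l - ps n)"
      using gen_hybrid_quasi_nonexpansive[OF assms(1)] ps(1) \<open>l \<in> E\<close> by (intro always_eventually) blast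
    show "(\<lambda>n. norm (l - ps n)) \<longlonglongrightarrow> 0"
      using tendsto_norm_zero[OF LIM_zero[OF tendsto_diff[OF tendsto_const ps(2)]]] by simp
  qed
  then have "ps \<longlonglongrightarrow> S l"
    using tendsto_diff[OF tendsto_const[of "S l"]] by fastforce
  then have "S l = l"
    using ps(2) LIMSEQ_unique by blast
  with \<open>l \<in> E\<close> show "l \<in> fixset E S"
    by (simp add: fixset_def)
qed

lemma fixset_convex:
  assumes "gen_hybrid E lam gam S" "convex E"
  shows "convex (fixset E S)"
  unfolding convex_alt
proof (intro ballI allI impI, elim conjE)
  fix p q :: 'a and t :: real
  assume p: "p \<in> fixset E S" and q: "q \<in> fixset E S" and t: "0 \<le> t" "t \<le> 1"
  define z where "z = (1 - t) *\<^sub>R p + t *\<^sub>R q"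
  have "z \<in> E"
    using p q t assms(2) by (auto simp: fixset_def z_def intro: convexD_alt)
  have "z - p = t *\<^sub>R (q - p)" "z - q = (1 - t) *\<^sub>R (p - q)"
    by (simp_all add: z_def algebra_simps)
  then have "norm (z - p) = t * norm (p - q)" "norm (z - q) = (1 - t) * norm (p - q)"
    using t by (simp_all add: norm_minus_commute)
  then have "norm (S z - p) \<le> t * norm (p - q)" "norm (S z - q) \<le> (1 - t) * norm (p - q)"
    using gen_hybrid_quasi_nonexpansive[OF assms(1) _ \<open>z \<in> E\<close>] p q by fastforce+
  then have "(1 - t) * (norm (S z - p))\<^sup>2 + t * (norm (S z - q))\<^sup>2
                     \<le> (1 - t) * (t * norm (p - q))\<^sup>2 + t * ((1 - t) * norm (p - q))\<^sup>2"
    using t by (intro add_mono mult_left_mono power_mono) auto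
  also have "\<dots> = (1 - t) * t * (norm (p - q))\<^sup>2"
    by (simp add: power2_eq_square algebra_simps)
  moreover have "S z - z = (1 - t) *\<^sub>R (S z - p) + (1 - (1 - t)) *\<^sub>R (S z - q)"
    by (simp add: z_def algebra_simps)
  then have "(norm (S z - z))\<^sup>2
      = (1 - t) * (norm (S z - p))\<^sup>2 + t * (norm (S z - q))\<^sup>2 - (1 - t) * t * (norm (p - q))\<^sup>2"
    by (simp only: power2_norm_convex_comb) (simp add: norm_minus_commute)
  ultimately have "(norm (S z - z))\<^sup>2 \<le> 0"
    by linarith
  with \<open>z \<in> E\<close> show "(1 - t) *\<^sub>R p + t *\<^sub>R q \<in> fixset E S"
    by (simp add: fixset_def z_def)
qed

lemma power2_norm_diff_tendsto_zero:
  fixes a b :: "nat \<Rightarrow> 'a::real_inner"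
  assumes "(\<lambda>k. a k - b k) \<longlonglongrightarrow> 0" "\<And>k. norm (b k) \<le> M"
  shows "(\<lambda>k. (norm (a k - c))\<^sup>2 - (norm (b k - c))\<^sup>2) \<longlonglongrightarrow> 0"
proof -
  have "norm (b k - c) \<le> M + norm c" for k
    using norm_triangle_ineq4[of "b k" c] assms(2)[of k] by linarith
  then have "(\<lambda>k. (norm (a k - b k))\<^sup>2 + 2 * inner (a k - b k) (b k - c)) \<longlonglongrightarrow> 0\<^sup>2 + 2 * 0"
    using assms(1) by (intro tendsto_intros inner_tendsto_zero_bounded) (auto simp: tendsto_norm_zero)
  moreover have "(norm (a k - c))\<^sup>2 - (norm (b k - c))\<^sup>2
      = (norm (a k - b k))\<^sup>2 + 2 * inner (a k - b k) (b k - c)" for k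
    using power2_norm_add[of "a k - b k" "b k - c"] by simp
  ultimately show ?thesis
    by simp
qed

text \<open>Demiclosedness of \<open>I - S\<close> at \<open>0\<close>: pass to the limit in the defining inequality with
  \<open>x = w k\<close>, \<open>y = z\<close>; weak convergence kills the cross term in
  \<open>\<parallel>w k - S z\<parallel>\<^sup>2 - \<parallel>w k - z\<parallel>\<^sup>2 = \<parallel>z - S z\<parallel>\<^sup>2 + 2\<langle>w k - z, z - S z\<rangle>\<close>.\<close>
lemma gen_hybrid_demiclosed:
  assumes "gen_hybrid E lam gam S" "\<And>k. w k \<in> E" "z \<in> E" "weak_conv w z"
    and "\<And>k. norm (w k) \<le> M" "(\<lambda>k. S (w k) - w k) \<longlonglongrightarrow> 0"
  shows "S z = z"
proof -
  have hyb: "lam * ((norm (S (w k) - S z))\<^sup>2 - (norm (w k - S z))\<^sup>2)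
      + ((norm (w k - S z))\<^sup>2 - (norm (w k - z))\<^sup>2)
      \<le> gam * ((norm (S (w k) - z))\<^sup>2 - (norm (w k - z))\<^sup>2)" for k
  proof -
    have "lam * (norm (S (w k) - S z))\<^sup>2 + (1 - lam) * (norm (w k - S z))\<^sup>2
        \<le> gam * (norm (S (w k) - z))\<^sup>2 + (1 - gam) * (norm (w k - z))\<^sup>2"
      using assms(1-3) unfolding gen_hybrid_def by blast
    then show ?thesis
      unfolding left_diff_distrib right_diff_distrib by linarith
  qed
  have "(norm (w k - S z))\<^sup>2 - (norm (w k - z))\<^sup>2
          = (norm (z - S z))\<^sup>2 + 2 * inner (w k - z) (z - S z)" for k
    using power2_norm_add[of "w k - z" "z - S z"] by simp
  moreover have "(\<lambda>k. (norm (z - S z))\<^sup>2 + 2 * inner (w k - z) (z - S z))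
                   \<longlonglongrightarrow> (norm (z - S z))\<^sup>2 + 2 * 0"
    using weak_conv_inner_diff_tendsto_zero[OF assms(4)] by (intro tendsto_intros)
  ultimately have "(\<lambda>k. lam * ((norm (S (w k) - S z))\<^sup>2 - (norm (w k - S z))\<^sup>2)
      + ((norm (w k - S z))\<^sup>2 - (norm (w k - z))\<^sup>2)) \<longlonglongrightarrow> lam * 0 + (norm (z - S z))\<^sup>2"
    using power2_norm_diff_tendsto_zero[OF assms(6,5)] by (intro tendsto_intros) auto
  moreover have "(\<lambda>k. gam * ((norm (S (w k) - z))\<^sup>2 - (norm (w k - z))\<^sup>2)) \<longlonglongrightarrow> gam * 0"
    using power2_norm_diff_tendsto_zero[OF assms(6,5)] by (intro tendsto_intros)
  ultimately have "(norm (z - S z))\<^sup>2 \<le> 0"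
    using hyb by (intro LIMSEQ_le) auto
  then show ?thesis
    by simp
qed

section \<open>Equilibrium problems\<close>

lemma convex_on_sublevel_convex:
  assumes "convex_on A g"
  shows "convex {z\<in>A. g z \<le> c}"
  unfolding convex_def
proof (intro ballI allI impI)
  fix p q :: 'a and s t :: real
  assume p: "p \<in> {z\<in>A. g z \<le> c}" and q: "q \<in> {z\<in>A. g z \<le> c}"
    and st: "0 \<le> s" "0 \<le> t" "s + t = 1"
  have "s *\<^sub>R p + t *\<^sub>R q \<in> A"
    using p q st assms by (auto simp: convex_on_def intro: convexD)
  moreover have "g (s *\<^sub>R p + t *\<^sub>R q) \<le> s * g p + t * g q"
    using assms p q st unfolding convex_on_def by blast
  moreover have "s * g p + t * g q \<le> s * c + t * c"
    using p q st by (intro add_mono mult_left_mono) auto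
  ultimately show "s *\<^sub>R p + t *\<^sub>R q \<in> {z\<in>A. g z \<le> c}"
    using st by (simp add: distrib_right[symmetric])
qed

locale equilibrium_bifunction =
  fixes E :: "'a::{real_inner,complete_space} set" and f :: "'a \<Rightarrow> 'a \<Rightarrow> real"
  assumes E_closed: "closed E" and E_convex: "convex E"
    and A1: "\<forall>z\<in>E. f z z = 0"
    and A2: "\<forall>z\<in>E. \<forall>y\<in>E. f z y + f y z \<le> 0"
    and A3: "\<forall>z\<in>E. \<forall>y\<in>E. \<forall>w\<in>E.
              Limsup (at_right 0) (\<lambda>t. ereal (f (t *\<^sub>R w + (1 - t) *\<^sub>R z) y)) \<le> ereal (f z y)"
    and A4: "\<forall>z\<in>E. convex_on E (f z) \<and> lsc_on E (f z)"
begin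

lemma EP_nonpos: "p \<in> EP E f \<Longrightarrow> y \<in> E \<Longrightarrow> f y p \<le> 0"
  using A2 by (fastforce simp: EP_def)

text \<open>Minty's lemma: along the segment from \<open>z\<close> to \<open>y\<close>, convexity and \<open>A1\<close> give
  \<open>f (t y + (1 - t) z) y \<ge> 0\<close>, and \<open>A3\<close> passes this to the limit \<open>t \<rightarrow> 0\<close>.\<close>
lemma EP_if_minty:
  assumes "z \<in> E" and minty: "\<forall>y\<in>E. f y z \<le> 0"
  shows "z \<in> EP E f"
  unfolding EP_def
proof (intro CollectI conjI ballI \<open>z \<in> E\<close>)
  fix y
  assume "y \<in> E"
  have "0 \<le> f (t *\<^sub>R y + (1 - t) *\<^sub>R z) y" if t: "0 < t" "t < 1" for t
  proof -
    define yt where "yt = t *\<^sub>R y + (1 - t) *\<^sub>R z"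
    have "yt \<in> E"
      using \<open>y \<in> E\<close> \<open>z \<in> E\<close> t E_convex by (auto simp: yt_def intro: convexD)
    then have "convex_on E (f yt)"
      using A4 by blast
    then have "f yt (t *\<^sub>R y + (1 - t) *\<^sub>R z) \<le> t * f yt y + (1 - t) * f yt z"
      using \<open>y \<in> E\<close> \<open>z \<in> E\<close> t unfolding convex_on_def by simp
    moreover have "f yt yt = 0" "f yt z \<le> 0"
      using A1 minty \<open>yt \<in> E\<close> by auto
    ultimately have "0 \<le> t * f yt y"
      using t by (simp add: yt_def) (smt (verit) mult_nonneg_nonpos)
    then show ?thesis
      using t by (simp add: yt_def zero_le_mult_iff)
  qed
  then have "\<forall>\<^sub>F t in at_right 0. ereal 0 \<le> ereal (f (t *\<^sub>R y + (1 - t) *\<^sub>R z) y)"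
    unfolding eventually_at_right_field by (intro exI[of _ 1]) auto
  then have "ereal 0 \<le> Limsup (at_right 0) (\<lambda>t. ereal (f (t *\<^sub>R y + (1 - t) *\<^sub>R z) y))"
    by (rule le_Limsup[OF trivial_limit_at_right_real])
  also have "\<dots> \<le> ereal (f z y)"
    using A3 \<open>z \<in> E\<close> \<open>y \<in> E\<close> by blast
  finally show "0 \<le> f z y"
    by simp
qed

lemma EP_eq_sublevels: "EP E f = E \<inter> (\<Inter>y\<in>E. {z\<in>E. f y z \<le> 0})"
  using EP_if_minty EP_nonpos by (auto simp: EP_def)

lemma sublevel_closed:
  assumes "y \<in> E"
  shows "closed {z\<in>E. f y z \<le> c}"
proof -
  have "openin (top_of_set E) {z\<in>E. c < f y z}"
    using A4 assms by (auto simp: lsc_on_def)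
  then have "closedin (top_of_set E) (E - {z\<in>E. c < f y z})"
    by (intro closedin_diff closedin_self)
  moreover have "E - {z\<in>E. c < f y z} = {z\<in>E. f y z \<le> c}"
    by auto
  ultimately show ?thesis
    using closedin_closed_trans E_closed by metis
qed

lemma sublevel_convex:
  assumes "y \<in> E"
  shows "convex {z\<in>E. f y z \<le> c}"
  using A4 assms by (intro convex_on_sublevel_convex) auto

lemma EP_closed: "closed (EP E f)"
  unfolding EP_eq_sublevels using sublevel_closed E_closed by (intro closed_Int closed_INT) auto

lemma EP_convex: "convex (EP E f)"
  unfolding EP_eq_sublevels using sublevel_convex E_convex by (intro convex_Int convex_INT) auto

lemma weak_limit_nonpos:
  assumes "\<And>k. w k \<in> E" "weak_conv w z" "y \<in> E"
    and "g \<longlonglongrightarrow> 0" "\<forall>\<^sub>F k in sequentially. f y (w k) \<le> g k"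
  shows "f y z \<le> 0"
proof (rule field_le_epsilon)
  fix \<epsilon> :: real
  assume "\<epsilon> > 0"
  have "\<forall>\<^sub>F k in sequentially. g k < \<epsilon>"
    using order_tendstoD(2)[OF assms(4) \<open>\<epsilon> > 0\<close>] .
  with assms(5) have "\<forall>\<^sub>F k in sequentially. w k \<in> {v\<in>E. f y v \<le> \<epsilon>}"
    by eventually_elim (use assms(1) in force)
  from weak_conv_closed_convex[OF sublevel_closed[OF assms(3)] sublevel_convex[OF assms(3)]
      assms(2) this]
  show "f y z \<le> 0 + \<epsilon>"
    by simp
qed

lemma resolvent_dist_le:
  assumes "u \<in> E" "r > 0" "\<forall>y\<in>E. f u y + (1 / r) * inner (y - u) (u - x) \<ge> 0"
    and "p \<in> EP E f"
  shows "(norm (u - p))\<^sup>2 \<le> (norm (x - p))\<^sup>2 - (norm (u - x))\<^sup>2"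
proof -
  have "p \<in> E"
    using assms(4) by (simp add: EP_def)
  then have "0 \<le> (1 / r) * inner (p - u) (u - x)"
    using assms(3) EP_nonpos[OF assms(4,1)] by force
  then have "0 \<le> inner (p - u) (u - x)"
    using assms(2) by (simp add: zero_le_divide_iff)
  moreover have "(norm (x - p))\<^sup>2 = (norm (x - u))\<^sup>2 + (norm (u - p))\<^sup>2 + 2 * inner (x - u) (u - p)"
    using power2_norm_add[of "x - u" "u - p"] by simp
  moreover have "inner (x - u) (u - p) = inner (p - u) (u - x)"
    by (metis inner_commute inner_minus_left inner_minus_right minus_diff_eq)
  ultimately show ?thesis
    by (simp add: norm_minus_commute)
qed

lemma resolvent_upper_bound:
  assumes "u \<in> E" "\<forall>y\<in>E. f u y + (1 / r) * inner (y - u) (u - x) \<ge> 0" "y \<in> E"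
  shows "f y u \<le> inner (y - u) (u - x) / r"
  using assms A2 by force

end

section \<open>The iteration\<close>

lemma liminf_pos_imp_eventually_ge:
  assumes "liminf (\<lambda>n. ereal (a n)) > 0"
  shows "\<exists>c>0. \<forall>\<^sub>F n in sequentially. c \<le> a n"
proof -
  obtain c where c: "0 < ereal c" "ereal c < liminf (\<lambda>n. ereal (a n))"
    using ereal_dense2[OF assms] by blast
  from less_LiminfD[OF c(2)] have "\<forall>\<^sub>F n in sequentially. ereal c < ereal (a n)" .
  with c(1) show ?thesis
    by (intro exI[of _ c]) (auto elim: eventually_mono)
qed

lemma tendsto_zero_if_power2_le_decrement:
  fixes g :: "nat \<Rightarrow> 'a::real_normed_vector"
  assumes "convergent a" "c > 0" "\<forall>\<^sub>F n in sequentially. c * (norm (g n))\<^sup>2 \<le> a n - a (Suc n)"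
  shows "g \<longlonglongrightarrow> 0"
proof -
  obtain l where l: "a \<longlonglongrightarrow> l"
    using assms(1) by (auto simp: convergent_def)
  have "(\<lambda>n. a n - a (Suc n)) \<longlonglongrightarrow> l - l"
    using l LIMSEQ_Suc[OF l] by (rule tendsto_diff)
  then have decrement: "(\<lambda>n. (a n - a (Suc n)) / c) \<longlonglongrightarrow> 0"
    by (simp add: tendsto_divide_zero)
  have upper: "\<forall>\<^sub>F n in sequentially. (norm (g n))\<^sup>2 \<le> (a n - a (Suc n)) / c"
    using assms(3)
  proof (rule eventually_mono)
    fix n
    assume "c * (norm (g n))\<^sup>2 \<le> a n - a (Suc n)"
    then have "c * (norm (g n))\<^sup>2 / c \<le> (a n - a (Suc n)) / c"
      using assms(2) by (intro divide_right_mono) auto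
    with assms(2) show "(norm (g n))\<^sup>2 \<le> (a n - a (Suc n)) / c"
      by simp
  qed
  have "(\<lambda>n. (norm (g n))\<^sup>2) \<longlonglongrightarrow> 0"
    using tendsto_sandwich[OF always_eventually upper tendsto_const decrement] by simp
  then show ?thesis
    by (simp add: tendsto_norm_zero_iff)
qed

locale hybrid_equilibrium_iteration = equilibrium_bifunction E f
  for E :: "'a::{real_inner,complete_space} set" and f +
  fixes S :: "'a \<Rightarrow> 'a" and lam gam b :: real and r beta :: "nat \<Rightarrow> real" and x u :: "nat \<Rightarrow> 'a"
  assumes S_maps: "S ` E \<subseteq> E" and S_hyb: "gen_hybrid E lam gam S"
    and nonempty: "fixset E S \<inter> EP E f \<noteq> {}"
    and r_pos: "\<forall>n. r n > 0" and r_liminf: "liminf (\<lambda>n. ereal (r n)) > 0"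
    and b_pos: "0 < b" and beta_range: "\<forall>n. b \<le> beta n \<and> beta n \<le> 1"
    and beta_liminf: "liminf (\<lambda>n. ereal (beta n * (1 - beta n))) > 0"
    and x_0: "x 0 \<in> E"
    and u_def: "\<forall>n. u n \<in> E \<and> (\<forall>y\<in>E. f (u n) y + (1 / r n) * inner (y - u n) (u n - x n) \<ge> 0)"
    and x_rec: "\<forall>n. x (Suc n) = S ((1 - beta n) *\<^sub>R x n + beta n *\<^sub>R S (u n))"
begin

abbreviation Sol :: "'a set" where
  "Sol \<equiv> fixset E S \<inter> EP E f"

lemma Sol_closed: "closed Sol"
  using fixset_closed[OF S_hyb E_closed] EP_closed by blast

lemma Sol_convex: "convex Sol"
  using fixset_convex[OF S_hyb E_convex] EP_convex by (rule convex_Int)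

lemma u_in: "u n \<in> E"
  using u_def by blast

lemma beta_nonneg: "0 \<le> beta n"
  using beta_range b_pos by (meson order_trans less_imp_le)

lemma relaxation_in: "v \<in> E \<Longrightarrow> (1 - beta n) *\<^sub>R v + beta n *\<^sub>R S (u n) \<in> E"
  by (rule convexD[OF E_convex]) (use S_maps u_in beta_nonneg beta_range in auto)

lemma x_in: "x n \<in> E"
proof (induction n)
  case (Suc n)
  then show ?case
    using x_rec S_maps relaxation_in by auto
qed (use x_0 in simp)

lemma fejer_step:
  assumes "p \<in> Sol"
  shows "(norm (x (Suc n) - p))\<^sup>2 \<le> (norm (x n - p))\<^sup>2 - beta n * (norm (u n - x n))\<^sup>2
           - beta n * (1 - beta n) * (norm (x n - S (u n)))\<^sup>2"
proof -
  define y where "y = (1 - beta n) *\<^sub>R x n + beta n *\<^sub>R S (u n)"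
  have p: "p \<in> fixset E S" "p \<in> EP E f"
    using assms by auto
  have "y \<in> E"
    using relaxation_in[OF x_in] by (simp add: y_def)
  then have "(norm (x (Suc n) - p))\<^sup>2 \<le> (norm (y - p))\<^sup>2"
    using gen_hybrid_quasi_nonexpansive[OF S_hyb p(1)] x_rec by (simp add: y_def power_mono)
  moreover have "(norm (y - p))\<^sup>2 = beta n * (norm (S (u n) - p))\<^sup>2 + (1 - beta n) * (norm (x n - p))\<^sup>2
      - beta n * (1 - beta n) * (norm (x n - S (u n)))\<^sup>2"
  proof -
    have "y - p = beta n *\<^sub>R (S (u n) - p) + (1 - beta n) *\<^sub>R (x n - p)"
      by (simp add: y_def algebra_simps)
    then show ?thesis
      by (simp only: power2_norm_convex_comb) (simp add: norm_minus_commute)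
  qed
  moreover have "(norm (S (u n) - p))\<^sup>2 \<le> (norm (x n - p))\<^sup>2 - (norm (u n - x n))\<^sup>2"
    using gen_hybrid_quasi_nonexpansive[OF S_hyb p(1) u_in]
      resolvent_dist_le[OF u_in _ _ p(2)] r_pos u_def
    by (smt (verit) norm_ge_zero power_mono)
  then have "beta n * (norm (S (u n) - p))\<^sup>2
               \<le> beta n * ((norm (x n - p))\<^sup>2 - (norm (u n - x n))\<^sup>2)"
    using beta_nonneg by (rule mult_left_mono)
  ultimately show ?thesis
    unfolding right_diff_distrib left_diff_distrib by linarith
qed

lemma fejer: "p \<in> Sol \<Longrightarrow> norm (x (Suc n) - p) \<le> norm (x n - p)"
proof -
  assume "p \<in> Sol"
  have "0 \<le> beta n * (1 - beta n) * (norm (x n - S (u n)))\<^sup>2"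
    using beta_nonneg beta_range by simp
  then have "(norm (x (Suc n) - p))\<^sup>2 \<le> (norm (x n - p))\<^sup>2"
    using fejer_step[OF \<open>p \<in> Sol\<close>, of n] beta_nonneg[of n] by (smt (verit) zero_le_mult_iff zero_le_power2)
  then show ?thesis
    by (rule power2_le_imp_le) simp
qed

lemma dist_power2_convergent:
  assumes "p \<in> Sol"
  shows "convergent (\<lambda>n. (norm (x n - p))\<^sup>2)"
proof -
  have "decseq (\<lambda>n. (norm (x n - p))\<^sup>2)"
    using fejer[OF assms] by (intro decseq_SucI power_mono) auto
  moreover have "\<forall>n. 0 \<le> (norm (x n - p))\<^sup>2"
    by simp
  ultimately show ?thesis
    using decseq_convergent unfolding convergent_def by blast
qed

lemma u_bounded: "\<exists>M. \<forall>n. norm (u n) \<le> M"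
proof -
  obtain p where "p \<in> Sol"
    using nonempty by blast
  have "norm (u n) \<le> norm (x 0 - p) + norm p" for n
  proof -
    have "(norm (u n - p))\<^sup>2 \<le> (norm (x n - p))\<^sup>2"
      using resolvent_dist_le[where u="u n" and r="r n" and x="x n" and p=p] r_pos u_def \<open>p \<in> Sol\<close>
      by (smt (verit) IntD2 zero_le_power2)
    then have "norm (u n - p) \<le> norm (x n - p)"
      by (rule power2_le_imp_le) simp
    also have "\<dots> \<le> norm (x 0 - p)"
      using fejer_monotone_le[of x p, OF fejer[OF \<open>p \<in> Sol\<close>]] by simp
    finally show ?thesis
      using norm_triangle_sub[of "u n" p] by linarith
  qed
  then show ?thesis
    by blast
qed

lemma u_minus_x_tendsto_zero: "(\<lambda>n. u n - x n) \<longlonglongrightarrow> 0"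
proof -
  obtain p where "p \<in> Sol"
    using nonempty by blast
  have "b * (norm (u n - x n))\<^sup>2
          \<le> (norm (x n - p))\<^sup>2 - (norm (x (Suc n) - p))\<^sup>2" for n
  proof -
    have "b * (norm (u n - x n))\<^sup>2 \<le> beta n * (norm (u n - x n))\<^sup>2"
      using beta_range by (intro mult_right_mono) auto
    moreover have "0 \<le> beta n * (1 - beta n) * (norm (x n - S (u n)))\<^sup>2"
      using beta_nonneg beta_range by simp
    ultimately show ?thesis
      using fejer_step[OF \<open>p \<in> Sol\<close>, of n] by linarith
  qed
  then show ?thesis
    by (intro tendsto_zero_if_power2_le_decrement[OF dist_power2_convergent[OF \<open>p \<in> Sol\<close>] b_pos]
        always_eventually) blast
qed

lemma x_minus_Su_tendsto_zero: "(\<lambda>n. x n - S (u n)) \<longlonglongrightarrow> 0"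
proof -
  obtain p where "p \<in> Sol"
    using nonempty by blast
  obtain c where "c > 0" and c: "\<forall>\<^sub>F n in sequentially. c \<le> beta n * (1 - beta n)"
    using liminf_pos_imp_eventually_ge[OF beta_liminf] by blast
  have "\<forall>\<^sub>F n in sequentially. c * (norm (x n - S (u n)))\<^sup>2
          \<le> (norm (x n - p))\<^sup>2 - (norm (x (Suc n) - p))\<^sup>2"
    using c
  proof (rule eventually_mono)
    fix n
    assume "c \<le> beta n * (1 - beta n)"
    then have "c * (norm (x n - S (u n)))\<^sup>2 \<le> beta n * (1 - beta n) * (norm (x n - S (u n)))\<^sup>2"
      by (intro mult_right_mono) auto
    moreover have "0 \<le> beta n * (norm (u n - x n))\<^sup>2"
      using beta_nonneg by simp
    ultimately show "c * (norm (x n - S (u n)))\<^sup>2 \<le> (norm (x n - p))\<^sup>2 - (norm (x (Suc n) - p))\<^sup>2"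
      using fejer_step[OF \<open>p \<in> Sol\<close>, of n] by linarith
  qed
  then show ?thesis
    by (rule tendsto_zero_if_power2_le_decrement[OF dist_power2_convergent[OF \<open>p \<in> Sol\<close>] \<open>c > 0\<close>])
qed

lemma equilibrium_gap_tendsto_zero:
  assumes "y \<in> E"
  shows "\<exists>g. g \<longlonglongrightarrow> 0 \<and> (\<forall>\<^sub>F n in sequentially. f y (u n) \<le> g n)"
proof -
  obtain \<rho> where "\<rho> > 0" and \<rho>: "\<forall>\<^sub>F n in sequentially. \<rho> \<le> r n"
    using liminf_pos_imp_eventually_ge[OF r_liminf] by blast
  obtain M where "\<And>n. norm (u n) \<le> M"
    using u_bounded by blast
  then have "norm (y - u n) \<le> norm y + M" for n
    using norm_triangle_ineq4[of y "u n"] by (smt (verit))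
  then have "(\<lambda>n. inner (u n - x n) (y - u n)) \<longlonglongrightarrow> 0"
    by (rule inner_tendsto_zero_bounded[OF u_minus_x_tendsto_zero])
  then have "(\<lambda>n. \<bar>inner (y - u n) (u n - x n)\<bar> / \<rho>) \<longlonglongrightarrow> 0"
    using tendsto_rabs_zero tendsto_divide_zero by (fastforce simp: inner_commute)
  moreover have "\<forall>\<^sub>F n in sequentially. f y (u n) \<le> \<bar>inner (y - u n) (u n - x n)\<bar> / \<rho>"
    using \<rho>
  proof (rule eventually_mono)
    fix n
    assume "\<rho> \<le> r n"
    have "f y (u n) \<le> inner (y - u n) (u n - x n) / r n"
      using resolvent_upper_bound[OF u_in _ assms] u_def by blast
    also have "\<dots> \<le> \<bar>inner (y - u n) (u n - x n)\<bar> / r n"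
      using r_pos less_imp_le by (intro divide_right_mono) auto
    also have "\<dots> \<le> \<bar>inner (y - u n) (u n - x n)\<bar> / \<rho>"
      using \<open>\<rho> > 0\<close> \<open>\<rho> \<le> r n\<close> by (intro divide_left_mono) auto
    finally show "f y (u n) \<le> \<bar>inner (y - u n) (u n - x n)\<bar> / \<rho>" .
  qed
  ultimately show ?thesis
    by blast
qed

lemma weak_cluster_in_Sol:
  assumes \<sigma>: "strict_mono \<sigma>" and z: "weak_conv (x \<circ> \<sigma>) z"
  shows "z \<in> Sol"
proof -
  obtain M where M: "\<And>n. norm (u n) \<le> M"
    using u_bounded by blast
  have uz: "weak_conv (\<lambda>k. u (\<sigma> k)) z"
    using weak_conv_diff_tendsto_zero[OF z] LIMSEQ_subseq_LIMSEQ[OF u_minus_x_tendsto_zero \<sigma>]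
    by (simp add: o_def)
  have "z \<in> E"
    using weak_conv_closed_convex[OF E_closed E_convex uz] u_in by simp
  have "(\<lambda>k. u (\<sigma> k) - S (u (\<sigma> k))) \<longlonglongrightarrow> 0"
    using LIMSEQ_subseq_LIMSEQ[OF tendsto_add[OF u_minus_x_tendsto_zero x_minus_Su_tendsto_zero] \<sigma>]
    by (simp add: o_def)
  then have "S z = z"
    using gen_hybrid_demiclosed[OF S_hyb u_in \<open>z \<in> E\<close> uz M] tendsto_minus[of _ 0] by fastforce
  moreover have "z \<in> EP E f"
  proof (rule EP_if_minty[OF \<open>z \<in> E\<close>], intro ballI)
    fix y
    assume "y \<in> E"
    then obtain g where "g \<longlonglongrightarrow> 0" "\<forall>\<^sub>F n in sequentially. f y (u n) \<le> g n"
      using equilibrium_gap_tendsto_zero by blast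
    then show "f y z \<le> 0"
      using LIMSEQ_subseq_LIMSEQ[OF _ \<sigma>] eventually_subseq[OF \<sigma>]
      by (intro weak_limit_nonpos[OF u_in uz \<open>y \<in> E\<close>, of "g \<circ> \<sigma>"]) (auto simp: o_def)
  qed
  ultimately show ?thesis
    using \<open>z \<in> E\<close> by (simp add: fixset_def)
qed

end

theorem corollary3p3:
  fixes E :: "'a::{real_inner,complete_space} set"
    and f :: "'a \<Rightarrow> 'a \<Rightarrow> real"
    and S :: "'a \<Rightarrow> 'a"
    and lam gam b :: real
    and r beta :: "nat \<Rightarrow> real"
    and x u :: "nat \<Rightarrow> 'a"
    and x0 :: 'a
  assumes E_ne: "E \<noteq> {}" and E_closed: "closed E" and E_convex: "convex E"
    and A1: "\<forall>z\<in>E. f z z = 0"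
    and A2: "\<forall>z\<in>E. \<forall>y\<in>E. f z y + f y z \<le> 0"
    and A3: "\<forall>z\<in>E. \<forall>y\<in>E. \<forall>w\<in>E.
              Limsup (at_right 0) (\<lambda>t. ereal (f (t *\<^sub>R w + (1 - t) *\<^sub>R z) y)) \<le> ereal (f z y)"
    and A4: "\<forall>z\<in>E. convex_on E (f z) \<and> lsc_on E (f z)"
    and S_maps: "S ` E \<subseteq> E"
    and S_hyb: "gen_hybrid E lam gam S"
    and nonempty: "fixset E S \<inter> EP E f \<noteq> {}"
    and r_pos: "\<forall>n. r n > 0"
    and r_liminf: "liminf (\<lambda>n. ereal (r n)) > 0"
    and b_range: "0 < b" "b < 1"
    and beta_range: "\<forall>n. b \<le> beta n \<and> beta n \<le> 1"
    and beta_liminf: "liminf (\<lambda>n. ereal (beta n * (1 - beta n))) > 0"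
    and x0_in: "x0 \<in> E"
    and x_init: "x 0 = x0"
    and u_def: "\<forall>n. u n \<in> E \<and>
                  (\<forall>y\<in>E. f (u n) y + (1 / r n) * inner (y - u n) (u n - x n) \<ge> 0)"
    and x_rec: "\<forall>n. x (Suc n) = S ((1 - beta n) *\<^sub>R x n + beta n *\<^sub>R S (u n))"
  shows "\<exists>v \<in> fixset E S \<inter> EP E f. weak_conv x v \<and>
           (\<lambda>n. metric_proj (fixset E S \<inter> EP E f) (x n)) \<longlonglongrightarrow> v"
proof -
  interpret hybrid_equilibrium_iteration E f S lam gam b r beta x u
    by unfold_locales (use assms in simp_all)
  show ?thesis
    by (rule fejer_monotone_weak_conv[of Sol x, OF Sol_closed Sol_convex nonempty fejer weak_cluster_in_Sol])
qed

end
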